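(* Let $L''$ be the Latin square of order $6$ $$L''=\begin{pmatrix} a&b&c&d&e&f\\ b&c&a&e&f&d\\ c&a&b&f&d&e\\ d&e&f&a&c&b\\ e&f&d&c&b&a\\ f&d&e&b&a&c \end{pmatrix}.$$ Let $L$ be any array obtained from $L''$ by replacing an arbitrary subset (possibly empty) of the occurrences of the symbol $d$ by a new symbol $g$. Then $L$ has no transversal.
   Context: An entry of an $n\times n$ array $A$ is a triple $(i,j,A_{ij})$. A transversal of an $n\times n$ array is a set of $n$ entries, no two agreeing in row, column, or symbol. Here $a,b,c,d,e,f,g$ are seven distinct symbols. *)

theory Defs
  imports Main
begin

definition entries :: "nat \<Rightarrow> (nat \<Rightarrow> nat \<Rightarrow> 'a) \<Rightarrow> (nat \<times> nat \<times> 'a) set" where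
  "entries n A = {(i, j, A i j) | i j. i < n \<and> j < n}"

definition transversal :: "nat \<Rightarrow> (nat \<Rightarrow> nat \<Rightarrow> 'a) \<Rightarrow> (nat \<times> nat \<times> 'a) set \<Rightarrow> bool" where
  "transversal n A T \<longleftrightarrow>
     T \<subseteq> entries n A \<and> card T = n \<and>
     (\<forall>x\<in>T. \<forall>y\<in>T. x \<noteq> y \<longrightarrow>
        fst x \<noteq> fst y \<and> fst (snd x) \<noteq> fst (snd y) \<and> snd (snd x) \<noteq> snd (snd y))"

definition Lpp :: "'a \<Rightarrow> 'a \<Rightarrow> 'a \<Rightarrow> 'a \<Rightarrow> 'a \<Rightarrow> 'a \<Rightarrow> nat \<Rightarrow> nat \<Rightarrow> 'a" where
  "Lpp a b c d e f i j =
     [[a,b,c,d,e,f],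
      [b,c,a,e,f,d],
      [c,a,b,f,d,e],
      [d,e,f,a,c,b],
      [e,f,d,c,b,a],
      [f,d,e,b,a,c]] ! i ! j"

end

theory Submission
  imports Defs
begin

text \<open>
  Cut L'' into four 3 \<times> 3 blocks: the diagonal blocks carry a, b, c and the off-diagonal
  blocks d, e, f (or g). Reading a transversal as a permutation \<sigma>, as many rows leave the top
  half as enter it, so an even number 2k of its cells lies in the diagonal blocks, k in each.
  Distinctness of the symbols allows at most three diagonal and four off-diagonal cells, hence
  k = 1 and the four off-diagonal cells carry d, e, f, g.

  Read a, b, c and d, e, f as 0, 1, 2 mod 3 and g like d. Then cell (i, j) carries i + j, except
  in the bottom-right block, where it carries -(i + j). Summing i + \<sigma> i over all rows gives
  30 \<equiv> 0 and over the off-diagonal rows gives d + e + f + g \<equiv> 0, so the two diagonal cells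
  carry the same residue, hence the same symbol from a, b, c.
\<close>

lemma finite_entries: "finite (entries n A)"
proof -
  have "entries n A = (\<lambda>(i, j). (i, j, A i j)) ` ({..<n} \<times> {..<n})"
    by (auto simp: entries_def)
  then show ?thesis by simp
qed

lemma transversal_imp_permutation:
  assumes "transversal n A T"
  obtains \<sigma> where "bij_betw \<sigma> {..<n} {..<n}" and "inj_on (\<lambda>i. A i (\<sigma> i)) {..<n}"
proof -
  have sub: "T \<subseteq> entries n A" and card: "card T = n"
    and apart: "\<And>x y. x \<in> T \<Longrightarrow> y \<in> T \<Longrightarrow> x \<noteq> y \<Longrightarrow>
        fst x \<noteq> fst y \<and> fst (snd x) \<noteq> fst (snd y) \<and> snd (snd x) \<noteq> snd (snd y)"
    using assms unfolding transversal_def by blast+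
  have inj: "inj_on fst T" using apart by (meson inj_onI)
  have rows: "fst ` T = {..<n}"
    using sub card inj by (intro card_subset_eq) (auto simp: entries_def card_image)
  define \<rho> where "\<rho> = the_inv_into T fst"
  define \<sigma> where "\<sigma> i = fst (snd (\<rho> i))" for i
  have \<rho>: "\<rho> i \<in> T" "\<rho> i = (i, \<sigma> i, A i (\<sigma> i))" "\<sigma> i < n" if "i < n" for i
  proof -
    have "i \<in> fst ` T" using rows that by simp
    then have "\<rho> i \<in> T" and "fst (\<rho> i) = i"
      unfolding \<rho>_def using inj by (auto intro: the_inv_into_into f_the_inv_into_f)
    then show "\<rho> i \<in> T" "\<rho> i = (i, \<sigma> i, A i (\<sigma> i))" "\<sigma> i < n"
      using sub unfolding \<sigma>_def entries_def by auto
  qed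
  have apart\<rho>: "\<sigma> i \<noteq> \<sigma> j \<and> A i (\<sigma> i) \<noteq> A j (\<sigma> j)" if "i < n" "j < n" "i \<noteq> j" for i j
    using apart[of "\<rho> i" "\<rho> j"] \<rho>[OF that(1)] \<rho>[OF that(2)] that(3) by auto
  have "inj_on \<sigma> {..<n}" and "inj_on (\<lambda>i. A i (\<sigma> i)) {..<n}"
    using apart\<rho> by (auto intro!: inj_onI)
  moreover have "\<sigma> ` {..<n} = {..<n}"
    using \<rho>(3) \<open>inj_on \<sigma> {..<n}\<close> by (intro endo_inj_surj) auto
  ultimately show ?thesis using that by (auto simp: bij_betw_def)
qed

lemma card_entering_eq_card_leaving:
  assumes "bij_betw \<sigma> X X" "finite X" "B \<subseteq> X"
  shows "card ({x \<in> X. \<sigma> x \<in> B} - B) = card (B - {x \<in> X. \<sigma> x \<in> B})"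
proof -
  let ?P = "{x \<in> X. \<sigma> x \<in> B}"
  have "bij_betw \<sigma> ?P B"
    using assms(1,3) by (auto simp: bij_betw_def inj_on_def image_iff)
  then have "card ?P = card B" by (rule bij_betw_same_card)
  moreover have "finite ?P" "finite B" using assms(2,3) finite_subset by auto
  ultimately show ?thesis by (simp add: card_le_sym_Diff le_antisym)
qed

lemma permutation_6_diagonal_block_rows:
  fixes \<sigma> :: "nat \<Rightarrow> nat"
  assumes \<sigma>: "bij_betw \<sigma> {..<6} {..<6}"
    and diag: "card {i. i < 6 \<and> (i < 3) = (\<sigma> i < 3)} \<le> 3"
    and off: "card {i. i < 6 \<and> (i < 3) \<noteq> (\<sigma> i < 3)} \<le> 4"
  obtains q r where "q < 3" "3 \<le> r" "r < 6" "{i. i < 6 \<and> (i < 3) = (\<sigma> i < 3)} = {q, r}"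
proof -
  define B where "B = {..<3::nat}"
  define P where "P = {i \<in> {..<6}. \<sigma> i \<in> B}"
  have fin: "finite B" "finite P" "finite ({..<6} - B)" unfolding B_def P_def by auto
  have top: "card (B \<inter> P) + card (B - P) = 3"
    using card_Int_Diff[OF fin(1), of P] by (simp add: B_def)
  have "({..<6} - B) \<inter> P = P - B" by (auto simp: P_def)
  then have bottom: "card (P - B) + card ({..<6} - B - P) = 3"
    using card_Int_Diff[OF fin(3), of P] by (simp add: B_def)
  have "B \<subseteq> {..<6}" by (auto simp: B_def)
  then have cross: "card (P - B) = card (B - P)"
    unfolding P_def by (rule card_entering_eq_card_leaving[OF \<sigma> finite_lessThan])
  have diag_eq: "{i. i < 6 \<and> (i < 3) = (\<sigma> i < 3)} = (B \<inter> P) \<union> ({..<6} - B - P)"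
    and off_eq: "{i. i < 6 \<and> (i < 3) \<noteq> (\<sigma> i < 3)} = (B - P) \<union> (P - B)"
    by (auto simp: B_def P_def)
  have "card (B \<inter> P) + card ({..<6} - B - P) \<le> 3"
    using diag card_Un_disjoint[of "B \<inter> P" "{..<6} - B - P"] unfolding diag_eq
    by (simp add: fin Diff_eq Int_ac)
  moreover have "card (B - P) + card (P - B) \<le> 4"
    using off card_Un_disjoint[of "B - P" "P - B"] unfolding off_eq by (simp add: fin Diff_eq Int_ac)
  ultimately have "card (B \<inter> P) = 1" and "card ({..<6} - B - P) = 1"
    using top bottom cross by linarith+
  obtain q where q: "B \<inter> P = {q}"
    using \<open>card (B \<inter> P) = 1\<close> by (rule card_1_singletonE)
  obtain r where r: "{..<6} - B - P = {r}"
    using \<open>card ({..<6} - B - P) = 1\<close> by (rule card_1_singletonE)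
  have "q \<in> B" "r \<in> {..<6} - B"
    using q r by blast+
  then have "q < 3" "3 \<le> r" "r < 6"
    by (simp_all add: B_def)
  moreover have "{i. i < 6 \<and> (i < 3) = (\<sigma> i < 3)} = {q, r}"
    unfolding diag_eq q r by auto
  ultimately show thesis by (rule that)
qed

lemma sum_add_permutation:
  fixes \<sigma> :: "nat \<Rightarrow> nat"
  assumes "bij_betw \<sigma> X X"
  shows "(\<Sum>i\<in>X. i + \<sigma> i) = 2 * \<Sum>X"
  using sum.reindex_bij_betw[OF assms, of id] by (simp add: sum.distrib)

lemma mod_3_eq_double_if_dvd_add:
  fixes x y :: nat
  assumes "3 dvd x + y"
  shows "x mod 3 = 2 * y mod 3"
proof -
  have "x mod 3 = (x + y + 2 * y) mod 3" by simp
  also have "\<dots> = ((x + y) mod 3 + 2 * y) mod 3" by (simp only: mod_add_left_eq)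
  finally show ?thesis using assms by simp
qed

definition residue3 :: "'a \<Rightarrow> 'a \<Rightarrow> 'a \<Rightarrow> 'a \<Rightarrow> 'a \<Rightarrow> nat" where
  "residue3 b c e f x = (if x = b \<or> x = e then 1 else if x = c \<or> x = f then 2 else 0)"

lemma less_6_cases: "(i::nat) < 6 \<Longrightarrow> i \<in> {0, 1, 2, 3, 4, 5}"
  by auto

lemma residue3_nth:
  assumes "distinct [a, b, c, d, e, f]" "k < 3"
  shows "residue3 b c e f ([d, e, f] ! k) = k"
  using assms less_6_cases[of k] by (auto simp: residue3_def)

lemma Lpp_diagonal_block:
  assumes "i < 6" "j < 6" "(i < 3) = (j < 3)"
  shows "Lpp a b c d e f i j = [a, b, c] ! ((if i < 3 then i + j else 2 * (i + j)) mod 3)"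
  using less_6_cases[OF assms(1)] less_6_cases[OF assms(2)] assms(3)
  by (auto simp: Lpp_def)

lemma Lpp_off_diagonal_block:
  assumes "i < 6" "j < 6" "(i < 3) \<noteq> (j < 3)"
  shows "Lpp a b c d e f i j = [d, e, f] ! ((i + j) mod 3)"
  using less_6_cases[OF assms(1)] less_6_cases[OF assms(2)] assms(3)
  by (auto simp: Lpp_def)

context
  fixes a b c d e f g :: 'a and S :: "(nat \<times> nat) set" and L :: "nat \<Rightarrow> nat \<Rightarrow> 'a"
  assumes distinct: "distinct [a, b, c, d, e, f, g]"
    and S: "S \<subseteq> {(i, j). i < 6 \<and> j < 6 \<and> Lpp a b c d e f i j = d}"
    and L: "L = (\<lambda>i j. if (i, j) \<in> S then g else Lpp a b c d e f i j)"
begin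

lemma replaced_diagonal_block:
  assumes "i < 6" "j < 6" "(i < 3) = (j < 3)"
  shows "L i j \<in> {a, b, c}"
    and "L i j = [a, b, c] ! ((if i < 3 then i + j else 2 * (i + j)) mod 3)"
proof -
  note Lpp = Lpp_diagonal_block[OF assms, of a b c d e f]
  have "Lpp a b c d e f i j \<in> set [a, b, c]"
    unfolding Lpp by (rule nth_mem) simp
  moreover from this have "L i j = Lpp a b c d e f i j"
    using distinct S L by auto
  ultimately show "L i j \<in> {a, b, c}"
    and "L i j = [a, b, c] ! ((if i < 3 then i + j else 2 * (i + j)) mod 3)"
    using Lpp by simp_all
qed

lemma replaced_off_diagonal_block:
  assumes "i < 6" "j < 6" "(i < 3) \<noteq> (j < 3)"
  shows "L i j \<in> {d, e, f, g}"
    and "residue3 b c e f (L i j) = (i + j) mod 3"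
proof -
  note Lpp = Lpp_off_diagonal_block[OF assms, of a b c d e f]
  have "Lpp a b c d e f i j \<in> set [d, e, f]"
    unfolding Lpp by (rule nth_mem) simp
  moreover have "L i j = Lpp a b c d e f i j \<or> L i j = g \<and> Lpp a b c d e f i j = d"
    using S L by auto
  ultimately show "L i j \<in> {d, e, f, g}" by auto
  have "distinct [a, b, c, d, e, f]" using distinct by simp
  then have "residue3 b c e f (Lpp a b c d e f i j) = (i + j) mod 3"
    unfolding Lpp by (rule residue3_nth) simp
  \<comment> \<open>g only replaces d, and both have residue 0\<close>
  with \<open>L i j = _ \<or> _\<close> show "residue3 b c e f (L i j) = (i + j) mod 3"
    using distinct by (auto simp: residue3_def)
qed

lemma replaced_square_permutation_blocks:
  fixes \<sigma> :: "nat \<Rightarrow> nat"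
  assumes \<sigma>: "bij_betw \<sigma> {..<6} {..<6}"
    and inj: "inj_on (\<lambda>i. L i (\<sigma> i)) {..<6}"
  obtains q r where "q < 3" "3 \<le> r" "r < 6"
    and "{i. i < 6 \<and> (i < 3) = (\<sigma> i < 3)} = {q, r}"
    and "(\<lambda>i. L i (\<sigma> i)) ` ({..<6} - {q, r}) = {d, e, f, g}"
proof -
  define s where "s i = L i (\<sigma> i)" for i
  define Diag where "Diag = {i. i < 6 \<and> (i < 3) = (\<sigma> i < 3)}"
  define Off where "Off = {i. i < 6 \<and> (i < 3) \<noteq> (\<sigma> i < 3)}"
  have \<sigma>_less: "\<sigma> i < 6" if "i < 6" for i
    using \<sigma> that by (auto simp: bij_betw_def)
  have "s ` Diag \<subseteq> {a, b, c}"
    using replaced_diagonal_block(1) \<sigma>_less by (auto simp: s_def Diag_def)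
  moreover have "inj_on s Diag"
    using inj unfolding s_def by (rule inj_on_subset) (auto simp: Diag_def)
  ultimately have "card Diag \<le> card {a, b, c}"
    by (intro card_inj_on_le) simp_all
  then have "card Diag \<le> 3" using distinct by simp
  have Off_sub: "s ` Off \<subseteq> {d, e, f, g}"
    using replaced_off_diagonal_block(1) \<sigma>_less by (auto simp: s_def Off_def)
  moreover have inj_Off: "inj_on s Off"
    using inj unfolding s_def by (rule inj_on_subset) (auto simp: Off_def)
  ultimately have "card Off \<le> card {d, e, f, g}"
    by (intro card_inj_on_le) simp_all
  then have "card Off \<le> 4" using distinct by simp
  obtain q r where qr: "q < 3" "3 \<le> r" "r < 6" and Diag_eq: "Diag = {q, r}"
    using \<open>card Diag \<le> 3\<close> \<open>card Off \<le> 4\<close>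
    by (rule permutation_6_diagonal_block_rows[OF \<sigma>, folded Diag_def Off_def])
  have "Off = {..<6} - Diag" by (auto simp: Diag_def Off_def)
  then have Off_eq: "Off = {..<6} - {q, r}" by (simp add: Diag_eq)
  have "s ` Off = {d, e, f, g}"
  proof (rule card_subset_eq)
    have "card (s ` Off) = card Off" using inj_Off by (rule card_image)
    also have "\<dots> = 4" using qr unfolding Off_eq by simp
    finally show "card (s ` Off) = card {d, e, f, g}" using distinct by simp
  qed (use Off_sub in simp_all)
  with qr Diag_eq show thesis
    unfolding s_def Diag_def Off_eq by (rule that)
qed

lemma replaced_square_permutation_symbols_not_inj:
  fixes \<sigma> :: "nat \<Rightarrow> nat"
  assumes \<sigma>: "bij_betw \<sigma> {..<6} {..<6}"
  shows "\<not> inj_on (\<lambda>i. L i (\<sigma> i)) {..<6}"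
proof
  assume inj: "inj_on (\<lambda>i. L i (\<sigma> i)) {..<6}"
  define s where "s i = L i (\<sigma> i)" for i
  define w where "w = residue3 b c e f"
  obtain q r where qr: "q < 3" "3 \<le> r" "r < 6"
    and Diag_eq: "{i. i < 6 \<and> (i < 3) = (\<sigma> i < 3)} = {q, r}"
    and Off_img: "s ` ({..<6} - {q, r}) = {d, e, f, g}"
    using replaced_square_permutation_blocks[OF \<sigma> inj] unfolding s_def by blast
  let ?Off = "{..<6} - {q, r}"
  have \<sigma>_less: "\<sigma> i < 6" if "i < 6" for i
    using \<sigma> that by (auto simp: bij_betw_def)
  have "q \<in> {q, r}" "r \<in> {q, r}" by simp_all
  then have "\<sigma> q < 3" "\<not> \<sigma> r < 3"
    using qr unfolding Diag_eq[symmetric] by simp_all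
  then have q: "s q = [a, b, c] ! ((q + \<sigma> q) mod 3)"
    and r: "s r = [a, b, c] ! (2 * (r + \<sigma> r) mod 3)"
    using qr \<sigma>_less[of r] replaced_diagonal_block(2)[of q "\<sigma> q"]
      replaced_diagonal_block(2)[of r "\<sigma> r"]
    by (simp_all add: s_def)
  have inj_s: "inj_on s {..<6}"
    using inj unfolding s_def .
  then have inj_Off: "inj_on s ?Off"
    by (rule inj_on_subset) blast
  have off_cell: "w (s i) = (i + \<sigma> i) mod 3" if "i \<in> ?Off" for i
  proof -
    have "i < 6" "(i < 3) \<noteq> (\<sigma> i < 3)"
      using that Diag_eq by auto
    then show ?thesis
      using replaced_off_diagonal_block(2)[OF _ \<sigma>_less] by (simp add: s_def w_def)
  qed
  have "(\<Sum>i\<in>?Off. i + \<sigma> i) mod 3 = (\<Sum>i\<in>?Off. (i + \<sigma> i) mod 3) mod 3"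
    by (rule mod_sum_eq[symmetric])
  also have "(\<Sum>i\<in>?Off. (i + \<sigma> i) mod 3) = (\<Sum>i\<in>?Off. w (s i))"
    by (rule sum.cong) (simp_all add: off_cell)
  also have "(\<Sum>i\<in>?Off. w (s i)) = (\<Sum>y\<in>{d, e, f, g}. w y)"
    using sum.reindex[OF inj_Off, of w] Off_img by simp
  also have "\<dots> = w d + w e + w f + w g"
    using distinct by simp
  also have "\<dots> = 3"
    using distinct by (auto simp: w_def residue3_def)
  finally have "3 dvd (\<Sum>i\<in>?Off. i + \<sigma> i)" by (simp add: dvd_eq_mod_eq_0)
  moreover have "(\<Sum>i\<in>?Off. i + \<sigma> i) + ((q + \<sigma> q) + (r + \<sigma> r)) = 30"
    using sum.subset_diff[of "{q, r}" "{..<6}" "\<lambda>i. i + \<sigma> i"] sum_add_permutation[OF \<sigma>] qr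
    by (simp add: eval_nat_numeral)
  then have "3 dvd (\<Sum>i\<in>?Off. i + \<sigma> i) + ((q + \<sigma> q) + (r + \<sigma> r))" by simp
  ultimately have "3 dvd (q + \<sigma> q) + (r + \<sigma> r)" by (simp add: dvd_add_right_iff)
  then have "s q = s r"
    using q r by (simp add: mod_3_eq_double_if_dvd_add)
  with inj_s have "q = r"
    by (rule inj_onD) (use qr in simp_all)
  with qr show False by simp
qed

end

theorem mainTheorem15:
  fixes a b c d e f g :: 'a
    and S :: "(nat \<times> nat) set"
    and L :: "nat \<Rightarrow> nat \<Rightarrow> 'a"
  assumes "distinct [a, b, c, d, e, f, g]"
    and "S \<subseteq> {(i, j). i < 6 \<and> j < 6 \<and> Lpp a b c d e f i j = d}"
    and "L = (\<lambda>i j. if (i, j) \<in> S then g else Lpp a b c d e f i j)"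
  shows "\<not> (\<exists>T. transversal 6 L T)"
proof
  assume "\<exists>T. transversal 6 L T"
  then obtain T where "transversal 6 L T" ..
  then obtain \<sigma> where "bij_betw \<sigma> {..<6} {..<6}" and "inj_on (\<lambda>i. L i (\<sigma> i)) {..<6}"
    by (rule transversal_imp_permutation)
  with replaced_square_permutation_symbols_not_inj[OF assms] show False by blast
qed

end
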